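(* Let $A_n(x,y,q,p,s)=\sum_{\sigma\in\mathfrak{S}_n}x^{\operatorname{wex}\sigma}y^{\operatorname{fix}\sigma}q^{\operatorname{cros}\sigma}p^{\operatorname{nest}\sigma}s^{\operatorname{inv}\sigma}$. Then, as formal power series in $t$, $$1+\sum_{n\ge1}A_n(x,y,q,p,s)\, t^n =\cfrac{1}{1-b_0t-\cfrac{a_0c_1t^2}{1-b_1t-\cfrac{a_1c_2t^2}{1-b_2t-\cfrac{a_2c_3t^2}{\ddots}}}},$$ where $a_h=x s^{2h+1} [h+1]_{q,ps}$, $b_h = xyp^h s^{2h} + (1+xq) s^h [h]_{q,ps}$, and $c_h= [h]_{q,ps}$.
   Context: $\mathfrak{S}_n$ is the set of permutations of $[n]$. For $\sigma\in\mathfrak{S}_n$: $\operatorname{wex}\sigma=\#\{i:\sigma_i\ge i\}$, $\operatorname{fix}\sigma=\#\{i:\sigma_i=i\}$, $\operatorname{cros}\sigma=\#\{(i,j): i<j\le\sigma_i<\sigma_j \text{ or } \sigma_i<\sigma_j<i<j\}$, $\operatorname{nest}\sigma=\#\{(i,j): i<j\le\sigma_j<\sigma_i \text{ or } \sigma_j<\sigma_i<i<j\}$, $\operatorname{inv}\sigma=\#\{(i,j):i<j,\ \sigma_i>\sigma_j\}$. For variables $a,b$ and $m\ge0$, $[m]_{a,b}=(a^m-b^m)/(a-b)=\sum_{i=0}^{m-1}a^ib^{m-1-i}$. *)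

theory Defs
  imports "HOL-Combinatorics.Permutations" "HOL-Computational_Algebra.Formal_Power_Series"
begin

definition wex :: "nat \<Rightarrow> (nat \<Rightarrow> nat) \<Rightarrow> nat" where
  "wex n \<sigma> = card {i \<in> {1..n}. \<sigma> i \<ge> i}"

definition fixcount :: "nat \<Rightarrow> (nat \<Rightarrow> nat) \<Rightarrow> nat" where
  "fixcount n \<sigma> = card {i \<in> {1..n}. \<sigma> i = i}"

definition cros :: "nat \<Rightarrow> (nat \<Rightarrow> nat) \<Rightarrow> nat" where
  "cros n \<sigma> = card {(i, j). i \<in> {1..n} \<and> j \<in> {1..n} \<and>
     ((i < j \<and> j \<le> \<sigma> i \<and> \<sigma> i < \<sigma> j) \<or> (\<sigma> i < \<sigma> j \<and> \<sigma> j < i \<and> i < j))}"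

definition nest :: "nat \<Rightarrow> (nat \<Rightarrow> nat) \<Rightarrow> nat" where
  "nest n \<sigma> = card {(i, j). i \<in> {1..n} \<and> j \<in> {1..n} \<and>
     ((i < j \<and> j \<le> \<sigma> j \<and> \<sigma> j < \<sigma> i) \<or> (\<sigma> j < \<sigma> i \<and> \<sigma> i < i \<and> i < j))}"

definition invs :: "nat \<Rightarrow> (nat \<Rightarrow> nat) \<Rightarrow> nat" where
  "invs n \<sigma> = card {(i, j). i \<in> {1..n} \<and> j \<in> {1..n} \<and> i < j \<and> \<sigma> i > \<sigma> j}"

definition A_poly :: "nat \<Rightarrow> 'a::comm_ring_1 \<Rightarrow> 'a \<Rightarrow> 'a \<Rightarrow> 'a \<Rightarrow> 'a \<Rightarrow> 'a" where
  "A_poly n x y q p s = (\<Sum>\<sigma> \<in> {\<sigma>. \<sigma> permutes {1..n}}.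
      x ^ wex n \<sigma> * y ^ fixcount n \<sigma> * q ^ cros n \<sigma> * p ^ nest n \<sigma> * s ^ invs n \<sigma>)"

definition qint :: "nat \<Rightarrow> 'a::comm_ring_1 \<Rightarrow> 'a \<Rightarrow> 'a" where
  "qint m a b = (\<Sum>i<m. a ^ i * b ^ (m - 1 - i))"

text \<open>Truncated J-fraction: jfrac a b c m k is the depth-m convergent of
  1/(1 - b_k t - a_k c_{k+1} t^2/(1 - b_{k+1} t - ...)), with the tail beyond depth m
  replaced by 0 (so depth 1 gives 1/(1 - b_k t)). The infinite J-fraction is the limit
  of the convergents in the X-adic topology of formal power series.\<close>

fun jfrac :: "(nat \<Rightarrow> 'a::field) \<Rightarrow> (nat \<Rightarrow> 'a) \<Rightarrow> (nat \<Rightarrow> 'a) \<Rightarrow> nat \<Rightarrow> nat \<Rightarrow> 'a fps" where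
  "jfrac a b c 0 k = 0"
| "jfrac a b c (Suc m) k = inverse (1 - fps_const (b k) * fps_X
      - fps_const (a k * c (Suc k)) * fps_X ^ 2 * jfrac a b c m (Suc k))"

end

theory Submission
  imports Defs
begin

text \<open>Read a permutation from left to right as a growing partial permutation of \<open>{1..k}\<close>. After
  step \<open>k\<close> the number \<open>h\<close> of points whose image is still undecided equals the number of points not
  yet hit, and adding \<open>k + 1\<close> raises \<open>h\<close> by one, lowers it by one or keeps it: permutations become
  weighted Motzkin paths ending at height \<open>0\<close>. Each step contributes a local weight recording the
  parts of \<open>wex\<close>, \<open>fix\<close>, \<open>cros\<close>, \<open>nest\<close> and \<open>inv\<close> decided at that step, and summing over which open
  arcs are closed produces the q-integers \<open>[h]_{q,ps}\<close>: from height \<open>h\<close> an up step weighs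
  \<open>x s^(2h+1)\<close>, a level step \<open>b_h\<close> and a down step \<open>[h]_{q,ps}^2\<close>, so that up and down weights
  multiply to \<open>a_h c_(h+1)\<close>. Flajolet's theorem then identifies the generating function of these
  paths with the J-fraction; here it is proved for paths of bounded height, whose generating
  function is exactly a convergent, by solving the level equations from the top down.\<close>

section \<open>Motzkin paths of bounded height and J-fractions\<close>

text \<open>\<open>motzkin_weight up lv dn m n h\<close> is the total weight of the Motzkin paths of length \<open>n\<close> from
  height \<open>0\<close> to height \<open>h\<close> that stay below height \<open>m\<close>; a step leaving height \<open>h\<close> weighs \<open>up h\<close>,
  \<open>lv h\<close> or \<open>dn h\<close>.\<close>

fun motzkin_weight ::
    "(nat \<Rightarrow> 'a::comm_ring_1) \<Rightarrow> (nat \<Rightarrow> 'a) \<Rightarrow> (nat \<Rightarrow> 'a) \<Rightarrow> nat \<Rightarrow> nat \<Rightarrow> nat \<Rightarrow> 'a" where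
  "motzkin_weight up lv dn m 0 h = (if h = 0 \<and> h < m then 1 else 0)"
| "motzkin_weight up lv dn m (Suc n) h = (if h < m then
     (if h \<ge> 1 then up (h - 1) * motzkin_weight up lv dn m n (h - 1) else 0)
     + lv h * motzkin_weight up lv dn m n h
     + (if h + 1 < m then dn (h + 1) * motzkin_weight up lv dn m n (h + 1) else 0) else 0)"

lemma motzkin_weight_beyond_bound: "m \<le> h \<Longrightarrow> motzkin_weight up lv dn m n h = 0"
  by (cases n) auto

definition motzkin_fps :: "(nat \<Rightarrow> 'a::comm_ring_1) \<Rightarrow> (nat \<Rightarrow> 'a) \<Rightarrow> (nat \<Rightarrow> 'a) \<Rightarrow> nat \<Rightarrow> nat \<Rightarrow> 'a fps" where
  "motzkin_fps up lv dn m h = Abs_fps (\<lambda>n. motzkin_weight up lv dn m n h)"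

lemma motzkin_fps_beyond_bound: "m \<le> h \<Longrightarrow> motzkin_fps up lv dn m h = 0"
  by (simp add: motzkin_fps_def motzkin_weight_beyond_bound fps_eq_iff)

lemma motzkin_fps_rec:
  assumes "h < m"
  shows "motzkin_fps up lv dn m h = (if h = 0 then 1 else 0) + fps_X *
     ((if h \<ge> 1 then fps_const (up (h - 1)) * motzkin_fps up lv dn m (h - 1) else 0)
      + fps_const (lv h) * motzkin_fps up lv dn m h + fps_const (dn (h + 1)) * motzkin_fps up lv dn m (h + 1))"
proof (rule fps_ext)
  fix n
  show "fps_nth (motzkin_fps up lv dn m h) n = fps_nth ((if h = 0 then 1 else 0) + fps_X *
     ((if h \<ge> 1 then fps_const (up (h - 1)) * motzkin_fps up lv dn m (h - 1) else 0)
      + fps_const (lv h) * motzkin_fps up lv dn m h + fps_const (dn (h + 1)) * motzkin_fps up lv dn m (h + 1))) n"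
    using assms by (cases n) (auto simp: motzkin_fps_def motzkin_weight_beyond_bound)
qed

text \<open>Induction downwards from the top level \<open>m - 1\<close>, where the right-hand side vanishes.\<close>

lemma motzkin_fps_Suc_level:
  fixes up lv dn :: "nat \<Rightarrow> 'a::field"
  assumes "h < m"
  shows "motzkin_fps up lv dn m (h + 1) =
    fps_const (up h) * fps_X * jfrac up lv dn (m - (h + 1)) (h + 1) * motzkin_fps up lv dn m h"
  using assms
proof (induction "m - h" arbitrary: h rule: less_induct)
  case less
  let ?F = "motzkin_fps up lv dn m"
  show ?case
  proof (cases "h + 1 = m")
    case True
    then show ?thesis by (simp add: motzkin_fps_beyond_bound)
  next
    case False
    then have h1: "h + 1 < m" using less by simp
    have next_level: "?F (h + 2) = fps_const (up (h + 1)) * fps_X * jfrac up lv dn (m - (h + 2)) (h + 2) * ?F (h + 1)"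
      using less(1)[of "h + 1"] h1 by simp
    define D where "D = 1 - fps_const (lv (h + 1)) * fps_X
      - fps_const (up (h + 1) * dn (h + 2)) * fps_X ^ 2 * jfrac up lv dn (m - (h + 2)) (h + 2)"
    have "m - (h + 1) = Suc (m - (h + 2))" using h1 by simp
    then have J: "jfrac up lv dn (m - (h + 1)) (h + 1) = inverse D"
      by (simp add: D_def numeral_2_eq_2)
    have D_inv: "D * inverse D = 1" by (intro inverse_mult_eq_1') (simp add: D_def)
    have level_eq: "?F (h + 1) = fps_X * (fps_const (up h) * ?F h
        + fps_const (lv (h + 1)) * ?F (h + 1) + fps_const (dn (h + 2)) * ?F (h + 2))"
      using motzkin_fps_rec[OF h1, of up lv dn] by (simp add: add.commute)
    have "?F (h + 1) * D = ?F (h + 1) - fps_X * fps_const (lv (h + 1)) * ?F (h + 1)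
         - fps_X * fps_const (dn (h + 2)) * ?F (h + 2)"
      unfolding D_def next_level
      by (simp add: algebra_simps power2_eq_square fps_const_mult[symmetric] del: fps_const_mult)
    also have "\<dots> = fps_X * fps_const (up h) * ?F h"
      by (subst (1) level_eq) (simp add: algebra_simps)
    finally have "?F (h + 1) * (D * inverse D) = fps_X * fps_const (up h) * ?F h * inverse D"
      by (simp add: mult.assoc[symmetric])
    then show ?thesis using D_inv J by (simp add: algebra_simps)
  qed
qed

lemma motzkin_fps_0_eq_jfrac:
  fixes up lv dn :: "nat \<Rightarrow> 'a::field"
  assumes "0 < m"
  shows "motzkin_fps up lv dn m 0 = jfrac up lv dn m 0"
proof -
  let ?F = "motzkin_fps up lv dn m"
  obtain m' where m: "m = Suc m'" using assms by (cases m) auto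
  define D where "D = 1 - fps_const (lv 0) * fps_X - fps_const (up 0 * dn 1) * fps_X ^ 2 * jfrac up lv dn m' 1"
  have J: "jfrac up lv dn m 0 = inverse D" by (simp add: m D_def)
  have level_1: "?F 1 = fps_const (up 0) * fps_X * jfrac up lv dn m' 1 * ?F 0"
    using motzkin_fps_Suc_level[OF assms, of up lv dn] m by simp
  have level_eq: "?F 0 = 1 + fps_X * (fps_const (lv 0) * ?F 0 + fps_const (dn 1) * ?F 1)"
    using motzkin_fps_rec[OF assms, of up lv dn] by simp
  have "?F 0 * D = ?F 0 - fps_X * fps_const (lv 0) * ?F 0 - fps_X * fps_const (dn 1) * ?F 1"
    unfolding D_def level_1
    by (simp add: algebra_simps power2_eq_square fps_const_mult[symmetric] del: fps_const_mult)
  also have "\<dots> = 1" by (subst (1) level_eq) (simp add: algebra_simps)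
  finally show ?thesis
    using J fps_inverse_unique[of D "?F 0"] by (simp add: D_def mult.commute)
qed

section \<open>Partial permutations and their one-point extensions\<close>

definition partial_perm :: "nat \<Rightarrow> (nat \<times> nat) set \<Rightarrow> bool" where
  "partial_perm n E \<longleftrightarrow> E \<subseteq> {1..n} \<times> {1..n}
     \<and> (\<forall>i j j'. (i, j) \<in> E \<longrightarrow> (i, j') \<in> E \<longrightarrow> j = j')
     \<and> (\<forall>i i' j. (i, j) \<in> E \<longrightarrow> (i', j) \<in> E \<longrightarrow> i = i')"

definition trunc :: "nat \<Rightarrow> (nat \<times> nat) set \<Rightarrow> (nat \<times> nat) set" where
  "trunc n E = E \<inter> ({1..n} \<times> {1..n})"

definition open_src :: "nat \<Rightarrow> (nat \<times> nat) set \<Rightarrow> nat set" where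
  "open_src n E = {1..n} - fst ` E"

definition open_tgt :: "nat \<Rightarrow> (nat \<times> nat) set \<Rightarrow> nat set" where
  "open_tgt n E = {1..n} - snd ` E"

text \<open>The ways of adding the point \<open>n + 1\<close> to a partial permutation of \<open>{1..n}\<close>:
  as a fixed point, with both its image and its preimage still open, as the image of an open
  source \<open>i\<close>, with an open target \<open>j\<close> as its image, or both.\<close>

datatype step = Fix | Open | Close_in nat | Close_out nat | Close_both nat nat

definition steps :: "nat \<Rightarrow> (nat \<times> nat) set \<Rightarrow> step set" where
  "steps n E = {Fix, Open} \<union> Close_in ` open_src n E \<union> Close_out ` open_tgt n E
     \<union> (\<lambda>(i, j). Close_both i j) ` (open_src n E \<times> open_tgt n E)"

fun extend :: "nat \<Rightarrow> (nat \<times> nat) set \<Rightarrow> step \<Rightarrow> (nat \<times> nat) set" where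
  "extend n E Fix = insert (Suc n, Suc n) E"
| "extend n E Open = E"
| "extend n E (Close_in i) = insert (i, Suc n) E"
| "extend n E (Close_out j) = insert (Suc n, j) E"
| "extend n E (Close_both i j) = insert (i, Suc n) (insert (Suc n, j) E)"

lemma finite_partial_perms: "finite {E. partial_perm n E}"
  by (rule finite_subset[of _ "Pow ({1..n} \<times> {1..n})"]) (auto simp: partial_perm_def)

lemma partial_perm_bounds: "partial_perm n E \<Longrightarrow> (a, b) \<in> E \<Longrightarrow> 1 \<le> a \<and> a \<le> n \<and> 1 \<le> b \<and> b \<le> n"
  unfolding partial_perm_def by auto

lemma trunc_trunc: "k \<le> n \<Longrightarrow> trunc k (trunc n E) = trunc k E"
  unfolding trunc_def by auto

lemma trunc_id: "E \<subseteq> {1..n} \<times> {1..n} \<Longrightarrow> trunc n E = E"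
  unfolding trunc_def by auto

lemma partial_perm_trunc: "partial_perm (Suc n) E \<Longrightarrow> partial_perm n (trunc n E)"
  unfolding partial_perm_def trunc_def by auto

lemma finite_open_src: "finite (open_src n E)"
  and finite_open_tgt: "finite (open_tgt n E)"
  by (auto simp: open_src_def open_tgt_def)

lemma open_src_bounds: "a \<in> open_src n E \<Longrightarrow> 1 \<le> a \<and> a \<le> n"
  and open_tgt_bounds: "a \<in> open_tgt n E \<Longrightarrow> 1 \<le> a \<and> a \<le> n"
  by (auto simp: open_src_def open_tgt_def)

lemma card_open_src_eq_card_open_tgt:
  assumes "partial_perm n E"
  shows "card (open_src n E) = card (open_tgt n E)"
proof -
  have sub: "fst ` E \<subseteq> {1..n}" "snd ` E \<subseteq> {1..n}" and fin: "finite E"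
    using assms finite_subset[of E "{1..n} \<times> {1..n}"] unfolding partial_perm_def by auto
  have "inj_on fst E" "inj_on snd E"
    using assms unfolding partial_perm_def inj_on_def by auto
  then have "card (fst ` E) = card E" "card (snd ` E) = card E"
    by (simp_all add: card_image)
  then show ?thesis
    unfolding open_src_def open_tgt_def using sub by (simp add: card_Diff_subset finite_subset)
qed

lemma partial_perm_extend:
  assumes "partial_perm n E" "c \<in> steps n E"
  shows "partial_perm (Suc n) (extend n E c)"
proof -
  have sub: "E \<subseteq> {1..Suc n} \<times> {1..Suc n}"
    and fu: "\<And>i j j'. (i, j) \<in> E \<Longrightarrow> (i, j') \<in> E \<Longrightarrow> j = j'"
    and iu: "\<And>i i' j. (i, j) \<in> E \<Longrightarrow> (i', j) \<in> E \<Longrightarrow> i = i'"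
    using assms(1) unfolding partial_perm_def by auto
  have new: "(a, Suc n) \<notin> E" "(Suc n, a) \<notin> E" for a
    using partial_perm_bounds[OF assms(1)] by fastforce+
  have src: "(i, j) \<notin> E" "1 \<le> i \<and> i \<le> n" if "i \<in> open_src n E" for i j
    using that unfolding open_src_def by force+
  have tgt: "(i, j) \<notin> E" "1 \<le> j \<and> j \<le> n" if "j \<in> open_tgt n E" for i j
    using that unfolding open_tgt_def by force+
  show ?thesis
  proof (cases c)
    case (Close_in i)
    then have "i \<in> open_src n E" using assms(2) unfolding steps_def by auto
    then show ?thesis using Close_in sub fu iu new src[of i] unfolding partial_perm_def by auto
  next
    case (Close_out j)
    then have "j \<in> open_tgt n E" using assms(2) unfolding steps_def by auto
    then show ?thesis using Close_out sub fu iu new tgt[of j] unfolding partial_perm_def by auto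
  next
    case (Close_both i j)
    then have "i \<in> open_src n E" "j \<in> open_tgt n E" using assms(2) unfolding steps_def by auto
    then show ?thesis
      using Close_both sub fu iu new src[of i] tgt[of j] unfolding partial_perm_def by auto
  qed (use sub fu iu new in \<open>auto simp: partial_perm_def\<close>)
qed

lemma trunc_extend:
  assumes "partial_perm n E" "c \<in> steps n E"
  shows "trunc n (extend n E c) = E"
  using assms partial_perm_bounds[OF assms(1)]
  unfolding steps_def trunc_def open_src_def open_tgt_def
  by (cases c) auto

lemma inj_on_extend:
  assumes "partial_perm n E"
  shows "inj_on (extend n E) (steps n E)"
proof
  fix c d assume c: "c \<in> steps n E" and d: "d \<in> steps n E" and eq: "extend n E c = extend n E d"
  have new: "(a, Suc n) \<notin> E" "(Suc n, a) \<notin> E" for a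
    using partial_perm_bounds[OF assms] by fastforce+
  have "Suc n \<notin> open_src n E" "Suc n \<notin> open_tgt n E"
    by (auto simp: open_src_def open_tgt_def)
  then show "c = d"
    using c d eq new unfolding steps_def
    apply (cases c; cases d)
    apply (simp_all add: image_iff)
    apply (metis insertCI insertE prod.inject)+
    done
qed

lemma partial_perm_Suc_cases:
  assumes "partial_perm (Suc n) E'"
  shows "E' \<in> extend n (trunc n E') ` steps n (trunc n E')"
proof -
  define E where "E = trunc n E'"
  let ?m = "Suc n"
  have sub: "E' \<subseteq> {1..?m} \<times> {1..?m}"
    and fu: "\<And>i j j'. (i, j) \<in> E' \<Longrightarrow> (i, j') \<in> E' \<Longrightarrow> j = j'"
    and iu: "\<And>i i' j. (i, j) \<in> E' \<Longrightarrow> (i', j) \<in> E' \<Longrightarrow> i = i'"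
    using assms unfolding partial_perm_def by blast+
  define new where "new = {pr \<in> E'. fst pr = ?m \<or> snd pr = ?m}"
  have split: "E' = new \<union> E"
    using sub unfolding new_def E_def trunc_def by auto
  have src: "Close_in i \<in> steps n E" if "(i, ?m) \<in> E'" "(?m, ?m) \<notin> E'" for i
  proof -
    have "i \<in> {1..n}" using that sub by (cases "i = ?m") auto
    moreover have "i \<notin> fst ` E" using that fu by (force simp: E_def trunc_def)
    ultimately have "i \<in> open_src n E" by (simp add: open_src_def)
    then show ?thesis by (simp add: steps_def)
  qed
  have tgt: "Close_out j \<in> steps n E" if "(?m, j) \<in> E'" "(?m, ?m) \<notin> E'" for j
  proof -
    have "j \<in> {1..n}" using that sub by (cases "j = ?m") auto
    moreover have "j \<notin> snd ` E" using that iu by (force simp: E_def trunc_def)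
    ultimately have "j \<in> open_tgt n E" by (simp add: open_tgt_def)
    then show ?thesis by (simp add: steps_def)
  qed
  have both: "Close_both i j \<in> steps n E" if "Close_in i \<in> steps n E" "Close_out j \<in> steps n E" for i j
    using that by (auto simp: steps_def)
  consider "(?m, ?m) \<in> E'"
    | i j where "(?m, ?m) \<notin> E'" "(i, ?m) \<in> E'" "(?m, j) \<in> E'"
    | i where "(?m, ?m) \<notin> E'" "(i, ?m) \<in> E'" "\<forall>j. (?m, j) \<notin> E'"
    | j where "(?m, ?m) \<notin> E'" "(?m, j) \<in> E'" "\<forall>i. (i, ?m) \<notin> E'"
    | "\<forall>i. (i, ?m) \<notin> E'" "\<forall>j. (?m, j) \<notin> E'"
    by blast
  then have "\<exists>c \<in> steps n E. E' = extend n E c"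
  proof cases
    case 1
    then have "new = {(?m, ?m)}" using fu iu unfolding new_def by auto
    then have "E' = extend n E Fix" using split by simp
    then show ?thesis unfolding steps_def by blast
  next
    case (2 i j)
    then have "new = {(i, ?m), (?m, j)}" using fu iu unfolding new_def by auto
    then have "E' = extend n E (Close_both i j)" using split by simp
    then show ?thesis using 2 src tgt both by blast
  next
    case (3 i)
    then have "new = {(i, ?m)}" using fu iu unfolding new_def by auto
    then have "E' = extend n E (Close_in i)" using split by simp
    then show ?thesis using 3 src by blast
  next
    case (4 j)
    then have "new = {(?m, j)}" using fu iu unfolding new_def by auto
    then have "E' = extend n E (Close_out j)" using split by simp
    then show ?thesis using 4 tgt by blast
  next
    case 5
    then have "new = {}" unfolding new_def by auto
    then have "E' = extend n E Open" using split by simp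
    then show ?thesis unfolding steps_def by blast
  qed
  then show ?thesis unfolding E_def by blast
qed

lemma trunc_fiber:
  assumes "partial_perm n E"
  shows "{E'. partial_perm (Suc n) E' \<and> trunc n E' = E} = extend n E ` steps n E"
proof (intro equalityI subsetI)
  fix E' assume "E' \<in> {E'. partial_perm (Suc n) E' \<and> trunc n E' = E}"
  then show "E' \<in> extend n E ` steps n E" using partial_perm_Suc_cases by blast
next
  fix E' assume "E' \<in> extend n E ` steps n E"
  then show "E' \<in> {E'. partial_perm (Suc n) E' \<and> trunc n E' = E}"
    using partial_perm_extend[OF assms] trunc_extend[OF assms] by blast
qed

section \<open>Local weights and the transfer between heights\<close>

definition count_above :: "'b::linorder set \<Rightarrow> 'b \<Rightarrow> nat" where
  "count_above S i = card {a \<in> S. i < a}"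

definition count_below :: "'b::linorder set \<Rightarrow> 'b \<Rightarrow> nat" where
  "count_below S i = card {a \<in> S. a < i}"

lemma count_below_all: "finite S \<Longrightarrow> (\<And>a. a \<in> S \<Longrightarrow> a < m) \<Longrightarrow> count_below S m = card S"
  unfolding count_below_def by (rule arg_cong[where f = card]) auto

lemma qint_Suc: "qint (Suc k) q r = r ^ k + q * qint k q r"
proof -
  have "qint (Suc k) q r = (\<Sum>i<Suc k. q ^ i * r ^ (k - i))" by (simp add: qint_def)
  also have "\<dots> = r ^ k + (\<Sum>i<k. q ^ Suc i * r ^ (k - Suc i))" by (subst sum.lessThan_Suc_shift) simp
  also have "\<dots> = r ^ k + q * qint k q r" by (simp add: qint_def sum_distrib_left mult.assoc)
  finally show ?thesis .
qed

lemma sum_count_above_below_eq_qint: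
  fixes q r :: "'a::comm_ring_1" and S :: "'b::linorder set"
  assumes "finite S"
  shows "(\<Sum>i\<in>S. q ^ count_above S i * r ^ count_below S i) = qint (card S) q r"
  using assms
proof (induction "card S" arbitrary: S)
  case 0
  then show ?case by (simp add: qint_def)
next
  case (Suc k)
  define M where "M = Max S"
  define S' where "S' = S - {M}"
  have "S \<noteq> {}" using Suc by auto
  then have M: "M \<in> S" "\<And>a. a \<in> S \<Longrightarrow> a \<le> M"
    using Suc.prems by (simp_all add: M_def)
  have S': "finite S'" "card S' = k" "S = insert M S'" "M \<notin> S'" using Suc M by (auto simp: S'_def)
  have above: "count_above S i = Suc (count_above S' i)" if "i \<in> S'" for i
  proof -
    have "{a \<in> S. i < a} = insert M {a \<in> S'. i < a}" using that M by (auto simp: S'_def less_le)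
    then show ?thesis using S' by (simp add: count_above_def)
  qed
  have below: "count_below S i = count_below S' i" if "i \<in> S'" for i
  proof -
    have "{a \<in> S. a < i} = {a \<in> S'. a < i}" using that M by (auto simp: S'_def) (meson leD)
    then show ?thesis by (simp add: count_below_def)
  qed
  have "count_above S M = 0" using M Suc.prems by (auto simp: count_above_def not_less[symmetric])
  moreover have "count_below S M = k"
  proof -
    have "{a \<in> S. a < M} = S'" using M by (auto simp: S'_def less_le)
    then show ?thesis using S' by (simp add: count_below_def)
  qed
  ultimately have "(\<Sum>i\<in>S. q ^ count_above S i * r ^ count_below S i)
      = r ^ k + q * (\<Sum>i\<in>S'. q ^ count_above S' i * r ^ count_below S' i)"
    using S' above below by (simp add: sum_distrib_left mult.assoc)
  then show ?case using Suc.hyps(1)[of S'] S' Suc.hyps(2) by (simp add: qint_Suc)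
qed

text \<open>The weight contributed by the point \<open>m\<close> once the partial permutation \<open>E'\<close> is known on
  \<open>{1..m}\<close>: the exponents count the contributions to \<open>wex\<close>, \<open>fix\<close>, \<open>cros\<close>, \<open>nest\<close> and \<open>inv\<close> that
  are decided at this moment. Here \<open>i\<close> is the preimage and \<open>j\<close> the image of \<open>m\<close> (if they lie in
  \<open>{1..m}\<close>), and the open sources and targets of \<open>E\<close> are the arcs still crossing over \<open>m\<close>.\<close>

definition local_weight ::
    "'a \<Rightarrow> 'a \<Rightarrow> 'a \<Rightarrow> 'a \<Rightarrow> 'a \<Rightarrow> nat \<Rightarrow> (nat \<times> nat) set \<Rightarrow> 'a::comm_ring_1" where
  "local_weight x y q p s m E' = (let E = trunc (m - 1) E'; src = open_src (m - 1) E; tgt = open_tgt (m - 1) E;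
     has_in = (\<exists>i. (i, m) \<in> E'); has_out = (\<exists>j. (m, j) \<in> E');
     i = (THE i. (i, m) \<in> E'); j = (THE j. (m, j) \<in> E');
     e_wex = (if has_out \<and> j < m then 0 else 1);
     e_fix = (if (m, m) \<in> E' then 1 else 0);
     e_cros = (if has_in \<and> i < m then count_above src i + (if has_out then 0 else 1) else 0)
       + (if has_out \<and> j < m then count_above tgt j else 0);
     e_nest = (if has_in then count_below src i else 0) + (if has_out \<and> j < m then count_below tgt j else 0);
     e_inv = (if has_out then count_below tgt j else card src + (if has_in then 0 else 1))
       + (if has_in then count_below src i else card src)
   in x ^ e_wex * y ^ e_fix * q ^ e_cros * p ^ e_nest * s ^ e_inv)"

lemma local_weight_eqI:
  assumes "(\<exists>i. (i, m) \<in> E') = HI" "(\<exists>j. (m, j) \<in> E') = HO"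
    "HI \<Longrightarrow> (THE i. (i, m) \<in> E') = i" "HO \<Longrightarrow> (THE j. (m, j) \<in> E') = j"
    "trunc (m - 1) E' = E" "((m, m) \<in> E') = F"
  shows "local_weight x y q p s m E' = x ^ (if HO \<and> j < m then 0 else 1) * y ^ (if F then 1 else 0)
    * q ^ ((if HI \<and> i < m then count_above (open_src (m - 1) E) i + (if HO then 0 else 1) else 0)
           + (if HO \<and> j < m then count_above (open_tgt (m - 1) E) j else 0))
    * p ^ ((if HI then count_below (open_src (m - 1) E) i else 0)
           + (if HO \<and> j < m then count_below (open_tgt (m - 1) E) j else 0))
    * s ^ ((if HO then count_below (open_tgt (m - 1) E) j else card (open_src (m - 1) E) + (if HI then 0 else 1))
           + (if HI then count_below (open_src (m - 1) E) i else card (open_src (m - 1) E)))"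
  using assms unfolding local_weight_def Let_def by (cases HI; cases HO) simp_all

context
  fixes x y q p s :: "'a::comm_ring_1" and n :: nat and E :: "(nat \<times> nat) set"
  assumes E: "partial_perm n E"
begin

private lemma new_point: "(a, Suc n) \<notin> E" "(Suc n, a) \<notin> E"
  using partial_perm_bounds[OF E] by fastforce+

private lemma trunc_E: "trunc n E = E"
  using E unfolding partial_perm_def trunc_def by blast

lemma local_weight_Fix:
  "local_weight x y q p s (Suc n) (extend n E Fix) = x * y * p ^ card (open_src n E) * s ^ (2 * card (open_src n E))"
proof -
  have "count_below (open_src n E) (Suc n) = card (open_src n E)"
    by (rule count_below_all) (auto simp: finite_open_src dest: open_src_bounds)
  moreover have "count_below (open_tgt n E) (Suc n) = card (open_src n E)"
    unfolding card_open_src_eq_card_open_tgt[OF E]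
    by (rule count_below_all) (auto simp: finite_open_tgt dest: open_tgt_bounds)
  moreover have "trunc n (insert (Suc n, Suc n) E) = E" using trunc_E by (auto simp: trunc_def)
  ultimately show ?thesis
    by (subst local_weight_eqI[where HI = True and HO = True and i = "Suc n" and j = "Suc n" and E = E and F = True])
       (use new_point in \<open>auto simp: mult_2 power_add\<close>)
qed

lemma local_weight_Open:
  "local_weight x y q p s (Suc n) (extend n E Open) = x * s ^ (2 * card (open_src n E) + 1)"
  by (subst local_weight_eqI[where HI = False and HO = False and E = E and F = False])
     (use trunc_E new_point in \<open>auto simp: mult_2\<close>)

lemma local_weight_Close_in:
  assumes i: "i \<in> open_src n E"
  shows "local_weight x y q p s (Suc n) (extend n E (Close_in i)) =
    x * q ^ (count_above (open_src n E) i + 1) * p ^ count_below (open_src n E) i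
      * s ^ (card (open_src n E) + count_below (open_src n E) i)"
proof -
  have "i < Suc n" using open_src_bounds[OF i] by simp
  moreover have "trunc n (insert (i, Suc n) E) = E" using trunc_E by (auto simp: trunc_def)
  ultimately show ?thesis
    by (subst local_weight_eqI[where HI = True and HO = False and i = i and E = E and F = False])
       (use new_point in \<open>auto simp: algebra_simps\<close>)
qed

lemma local_weight_Close_out:
  assumes j: "j \<in> open_tgt n E"
  shows "local_weight x y q p s (Suc n) (extend n E (Close_out j)) =
    q ^ count_above (open_tgt n E) j * p ^ count_below (open_tgt n E) j
      * s ^ (count_below (open_tgt n E) j + card (open_src n E))"
proof -
  have "j < Suc n" using open_tgt_bounds[OF j] by simp
  moreover have "trunc n (insert (Suc n, j) E) = E" using trunc_E by (auto simp: trunc_def)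
  ultimately show ?thesis
    by (subst local_weight_eqI[where HI = False and HO = True and j = j and E = E and F = False])
       (use new_point in \<open>auto simp: algebra_simps\<close>)
qed

lemma local_weight_Close_both:
  assumes i: "i \<in> open_src n E" and j: "j \<in> open_tgt n E"
  shows "local_weight x y q p s (Suc n) (extend n E (Close_both i j)) =
    q ^ (count_above (open_src n E) i + count_above (open_tgt n E) j)
      * p ^ (count_below (open_src n E) i + count_below (open_tgt n E) j)
      * s ^ (count_below (open_tgt n E) j + count_below (open_src n E) i)"
proof -
  have "i < Suc n" "j < Suc n" using open_src_bounds[OF i] open_tgt_bounds[OF j] by simp_all
  moreover have "trunc n (insert (i, Suc n) (insert (Suc n, j) E)) = E"
    using trunc_E \<open>i < Suc n\<close> \<open>j < Suc n\<close> by (auto simp: trunc_def)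
  ultimately show ?thesis
    by (subst local_weight_eqI[where HI = True and HO = True and i = i and j = j and E = E and F = False])
       (use new_point in \<open>auto simp: algebra_simps\<close>)
qed

end

definition up_weight :: "'a \<Rightarrow> 'a \<Rightarrow> nat \<Rightarrow> 'a::comm_ring_1" where
  "up_weight x s h = x * s ^ (2 * h + 1)"

definition level_weight :: "'a \<Rightarrow> 'a \<Rightarrow> 'a \<Rightarrow> 'a \<Rightarrow> 'a \<Rightarrow> nat \<Rightarrow> 'a::comm_ring_1" where
  "level_weight x y q p s h = x * y * p ^ h * s ^ (2 * h) + (1 + x * q) * s ^ h * qint h q (p * s)"

definition down_weight :: "'a \<Rightarrow> 'a \<Rightarrow> 'a \<Rightarrow> nat \<Rightarrow> 'a::comm_ring_1" where
  "down_weight q p s h = qint h q (p * s) * qint h q (p * s)"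

definition transfer :: "'a \<Rightarrow> 'a \<Rightarrow> 'a \<Rightarrow> 'a \<Rightarrow> 'a \<Rightarrow> nat \<Rightarrow> nat \<Rightarrow> 'a::comm_ring_1" where
  "transfer x y q p s h h' = (if h' = Suc h then up_weight x s h else 0)
     + (if h' = h then level_weight x y q p s h else 0)
     + (if Suc h' = h then down_weight q p s h else 0)"

lemma sum_steps:
  "(\<Sum>c\<in>steps n E. f c) = f Fix + f Open + (\<Sum>i\<in>open_src n E. f (Close_in i))
     + (\<Sum>j\<in>open_tgt n E. f (Close_out j)) + (\<Sum>i\<in>open_src n E. \<Sum>j\<in>open_tgt n E. f (Close_both i j))"
proof -
  let ?A = "{Fix, Open}" and ?B = "Close_in ` open_src n E" and ?C = "Close_out ` open_tgt n E"
    and ?D = "(\<lambda>(i, j). Close_both i j) ` (open_src n E \<times> open_tgt n E)"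
  have fin: "finite ?A" "finite ?B" "finite ?C" "finite ?D"
    by (simp_all add: finite_open_src finite_open_tgt)
  have "(\<Sum>c\<in>steps n E. f c) = sum f (?A \<union> ?B \<union> ?C) + sum f ?D"
    unfolding steps_def by (rule sum.union_disjoint) (use fin in force)+
  also have "sum f (?A \<union> ?B \<union> ?C) = sum f (?A \<union> ?B) + sum f ?C"
    by (rule sum.union_disjoint) (use fin in force)+
  also have "sum f (?A \<union> ?B) = sum f ?A + sum f ?B"
    by (rule sum.union_disjoint) (use fin in force)+
  also have "sum f ?B = (\<Sum>i\<in>open_src n E. f (Close_in i))"
    by (subst sum.reindex) (auto simp: inj_on_def)
  also have "sum f ?C = (\<Sum>j\<in>open_tgt n E. f (Close_out j))"
    by (subst sum.reindex) (auto simp: inj_on_def)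
  also have "sum f ?D = (\<Sum>i\<in>open_src n E. \<Sum>j\<in>open_tgt n E. f (Close_both i j))"
    by (subst sum.reindex) (auto simp: inj_on_def split_def sum.cartesian_product)
  finally show ?thesis by simp
qed

definition step_weight_to ::
    "'a \<Rightarrow> 'a \<Rightarrow> 'a \<Rightarrow> 'a \<Rightarrow> 'a \<Rightarrow> nat \<Rightarrow> (nat \<times> nat) set \<Rightarrow> nat \<Rightarrow> step \<Rightarrow> 'a::comm_ring_1" where
  "step_weight_to x y q p s n E h' c = (if card (open_src (Suc n) (extend n E c)) = h'
     then local_weight x y q p s (Suc n) (extend n E c) else 0)"

context
  fixes x y q p s :: "'a::comm_ring_1" and n h :: nat and E :: "(nat \<times> nat) set"
  assumes E: "partial_perm n E"
  defines "h \<equiv> card (open_src n E)"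
begin

private lemma fst_E: "fst ` E \<subseteq> {1..n}"
  using E unfolding partial_perm_def by auto

private lemma sum_open_src_ranks: "(\<Sum>i\<in>open_src n E. q ^ count_above (open_src n E) i * (p * s) ^ count_below (open_src n E) i) = qint h q (p * s)"
  unfolding h_def by (rule sum_count_above_below_eq_qint[OF finite_open_src])

private lemma sum_open_tgt_ranks: "(\<Sum>j\<in>open_tgt n E. q ^ count_above (open_tgt n E) j * (p * s) ^ count_below (open_tgt n E) j) = qint h q (p * s)"
  using sum_count_above_below_eq_qint[OF finite_open_tgt] card_open_src_eq_card_open_tgt[OF E] by (simp add: h_def)

lemma step_weight_to_Fix: "step_weight_to x y q p s n E h' Fix = (if h' = h then x * y * p ^ h * s ^ (2 * h) else 0)"
proof -
  have "open_src (Suc n) (extend n E Fix) = open_src n E" using fst_E unfolding open_src_def by auto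
  then show ?thesis using local_weight_Fix[OF E, of x y q p s] by (simp add: step_weight_to_def h_def)
qed

lemma step_weight_to_Open: "step_weight_to x y q p s n E h' Open = (if h' = Suc h then up_weight x s h else 0)"
proof -
  have "open_src (Suc n) (extend n E Open) = insert (Suc n) (open_src n E)"
    using fst_E unfolding open_src_def by auto
  moreover have "Suc n \<notin> open_src n E" by (auto simp: open_src_def)
  ultimately show ?thesis using local_weight_Open[OF E, of x y q p s] by (simp add: step_weight_to_def h_def finite_open_src up_weight_def)
qed

lemma sum_step_weight_to_Close_in:
  "(\<Sum>i\<in>open_src n E. step_weight_to x y q p s n E h' (Close_in i)) = (if h' = h then x * q * s ^ h * qint h q (p * s) else 0)"
proof -
  have "step_weight_to x y q p s n E h' (Close_in i) = (if h' = h then x * q * s ^ h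
      * (q ^ count_above (open_src n E) i * (p * s) ^ count_below (open_src n E) i) else 0)"
    if i: "i \<in> open_src n E" for i
  proof -
    have "open_src (Suc n) (extend n E (Close_in i)) = insert (Suc n) (open_src n E - {i})"
      using fst_E i unfolding open_src_def by auto
    moreover have "Suc n \<notin> open_src n E - {i}" by (auto simp: open_src_def)
    moreover have "h > 0" using i finite_open_src card_gt_0_iff unfolding h_def by blast
    ultimately have "card (open_src (Suc n) (extend n E (Close_in i))) = h"
      using i by (simp add: h_def finite_open_src card_Diff_singleton)
    then show ?thesis
      using local_weight_Close_in[OF E i, of x y q p s]
      by (simp add: step_weight_to_def h_def power_add power_mult_distrib mult_ac)
  qed
  then show ?thesis using sum_open_src_ranks by (simp add: sum_distrib_left[symmetric])
qed

lemma sum_step_weight_to_Close_out: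
  "(\<Sum>j\<in>open_tgt n E. step_weight_to x y q p s n E h' (Close_out j)) = (if h' = h then s ^ h * qint h q (p * s) else 0)"
proof -
  have "step_weight_to x y q p s n E h' (Close_out j) = (if h' = h then s ^ h
      * (q ^ count_above (open_tgt n E) j * (p * s) ^ count_below (open_tgt n E) j) else 0)"
    if j: "j \<in> open_tgt n E" for j
  proof -
    have "open_src (Suc n) (extend n E (Close_out j)) = open_src n E"
      using fst_E unfolding open_src_def by auto
    then show ?thesis
      using local_weight_Close_out[OF E j, of x y q p s]
      by (simp add: step_weight_to_def h_def power_add power_mult_distrib mult_ac)
  qed
  then show ?thesis using sum_open_tgt_ranks by (simp add: sum_distrib_left[symmetric])
qed

lemma sum_step_weight_to_Close_both:
  "(\<Sum>i\<in>open_src n E. \<Sum>j\<in>open_tgt n E. step_weight_to x y q p s n E h' (Close_both i j)) = (if Suc h' = h then down_weight q p s h else 0)"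
proof -
  have "step_weight_to x y q p s n E h' (Close_both i j) = (if Suc h' = h then
      (q ^ count_above (open_src n E) i * (p * s) ^ count_below (open_src n E) i)
      * (q ^ count_above (open_tgt n E) j * (p * s) ^ count_below (open_tgt n E) j) else 0)"
    if i: "i \<in> open_src n E" and j: "j \<in> open_tgt n E" for i j
  proof -
    have "open_src (Suc n) (extend n E (Close_both i j)) = open_src n E - {i}"
      using fst_E unfolding open_src_def by auto
    then have "card (open_src (Suc n) (extend n E (Close_both i j))) = h - 1"
      using i by (simp add: h_def finite_open_src card_Diff_singleton)
    moreover have "h > 0" using i finite_open_src card_gt_0_iff unfolding h_def by blast
    ultimately have "(card (open_src (Suc n) (extend n E (Close_both i j))) = h') = (Suc h' = h)"
      by auto
    moreover have "local_weight x y q p s (Suc n) (extend n E (Close_both i j))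
      = (q ^ count_above (open_src n E) i * (p * s) ^ count_below (open_src n E) i)
        * (q ^ count_above (open_tgt n E) j * (p * s) ^ count_below (open_tgt n E) j)"
      unfolding local_weight_Close_both[OF E i j] by (simp add: power_add power_mult_distrib mult_ac)
    ultimately show ?thesis by (simp add: step_weight_to_def)
  qed
  then show ?thesis using sum_open_src_ranks sum_open_tgt_ranks
    by (simp add: down_weight_def sum_distrib_left[symmetric] sum_distrib_right[symmetric])
qed

lemma sum_step_weight_to: "(\<Sum>c\<in>steps n E. step_weight_to x y q p s n E h' c) = transfer x y q p s h h'"
  unfolding sum_steps step_weight_to_Fix step_weight_to_Open sum_step_weight_to_Close_in
    sum_step_weight_to_Close_out sum_step_weight_to_Close_both transfer_def level_weight_def
  by (simp add: algebra_simps)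

end

section \<open>Level sums satisfy the Motzkin recurrence\<close>

definition pp_weight :: "'a \<Rightarrow> 'a \<Rightarrow> 'a \<Rightarrow> 'a \<Rightarrow> 'a \<Rightarrow> nat \<Rightarrow> (nat \<times> nat) set \<Rightarrow> 'a::comm_ring_1" where
  "pp_weight x y q p s n E = (\<Prod>k\<in>{1..n}. local_weight x y q p s k (trunc k E))"

definition level_sum :: "'a \<Rightarrow> 'a \<Rightarrow> 'a \<Rightarrow> 'a \<Rightarrow> 'a \<Rightarrow> nat \<Rightarrow> nat \<Rightarrow> 'a::comm_ring_1" where
  "level_sum x y q p s n h = (\<Sum>E | partial_perm n E \<and> card (open_src n E) = h. pp_weight x y q p s n E)"

lemma pp_weight_Suc:
  assumes "E \<subseteq> {1..Suc n} \<times> {1..Suc n}"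
  shows "pp_weight x y q p s (Suc n) E = pp_weight x y q p s n (trunc n E) * local_weight x y q p s (Suc n) E"
proof -
  have "(\<Prod>k\<in>{1..n}. local_weight x y q p s k (trunc k (trunc n E)))
      = (\<Prod>k\<in>{1..n}. local_weight x y q p s k (trunc k E))"
    by (intro prod.cong refl) (simp add: trunc_trunc)
  then show ?thesis
    using trunc_id[OF assms] by (simp add: pp_weight_def atLeastAtMostSuc_conv mult.commute)
qed

lemma sum_if_card_open_src_eq:
  "(\<Sum>E | partial_perm n E. if card (open_src n E) = h then f E else 0) = (\<Sum>E | partial_perm n E \<and> card (open_src n E) = h. f E)"
  using sum.inter_filter[OF finite_partial_perms, where g = f and P = "\<lambda>E. card (open_src n E) = h"]
  by (simp add: conj_commute)

lemma level_sum_0: "level_sum x y q p s 0 h = (if h = 0 then 1 else 0)"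
proof -
  have "{E. partial_perm 0 E} = {{}}" by (auto simp: partial_perm_def)
  then show ?thesis
    by (simp flip: sum_if_card_open_src_eq add: level_sum_def pp_weight_def open_src_def)
qed

lemma mult_transfer_split:
  "w * transfer x y q p s h h' = (if h' \<ge> 1 then up_weight x s (h' - 1) * (if h = h' - 1 then w else 0) else 0)
     + level_weight x y q p s h' * (if h = h' then w else 0) + down_weight q p s (h' + 1) * (if h = h' + 1 then w else 0)"
  unfolding transfer_def by (cases "h' = Suc h"; cases "h' = h"; cases "Suc h' = h") (auto simp: algebra_simps)

text \<open>Grouping the partial permutations of \<open>{1..n+1}\<close> by their truncation to \<open>{1..n}\<close> shows that the
  level sums obey the recurrence of weighted Motzkin paths.\<close>

lemma level_sum_Suc:
  "level_sum x y q p s (Suc n) h' = (if h' \<ge> 1 then up_weight x s (h' - 1) * level_sum x y q p s n (h' - 1) else 0)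
     + level_weight x y q p s h' * level_sum x y q p s n h' + down_weight q p s (h' + 1) * level_sum x y q p s n (h' + 1)"
proof -
  let ?f = "\<lambda>E'. if card (open_src (Suc n) E') = h' then pp_weight x y q p s (Suc n) E' else 0"
  have "level_sum x y q p s (Suc n) h' = (\<Sum>E' | partial_perm (Suc n) E'. ?f E')"
    by (simp add: level_sum_def sum_if_card_open_src_eq)
  also have "\<dots> = (\<Sum>E | partial_perm n E. \<Sum>E' | partial_perm (Suc n) E' \<and> trunc n E' = E. ?f E')"
    using sum.group[of "{E'. partial_perm (Suc n) E'}" "{E. partial_perm n E}" "trunc n" ?f]
    by (simp add: finite_partial_perms image_subset_iff partial_perm_trunc)
  also have "\<dots> = (\<Sum>E | partial_perm n E. pp_weight x y q p s n E * transfer x y q p s (card (open_src n E)) h')"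
  proof (rule sum.cong[OF refl])
    fix E assume "E \<in> {E. partial_perm n E}"
    then have E: "partial_perm n E" by simp
    have "(\<Sum>E' | partial_perm (Suc n) E' \<and> trunc n E' = E. ?f E') = (\<Sum>c\<in>steps n E. ?f (extend n E c))"
      unfolding trunc_fiber[OF E] by (rule sum.reindex[OF inj_on_extend[OF E], unfolded comp_def])
    also have "\<dots> = (\<Sum>c\<in>steps n E. pp_weight x y q p s n E * step_weight_to x y q p s n E h' c)"
    proof (rule sum.cong[OF refl])
      fix c assume c: "c \<in> steps n E"
      have "extend n E c \<subseteq> {1..Suc n} \<times> {1..Suc n}"
        using partial_perm_extend[OF E c] by (simp add: partial_perm_def)
      then show "?f (extend n E c) = pp_weight x y q p s n E * step_weight_to x y q p s n E h' c"
        by (simp add: step_weight_to_def pp_weight_Suc trunc_extend[OF E c])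
    qed
    also have "\<dots> = pp_weight x y q p s n E * transfer x y q p s (card (open_src n E)) h'"
      by (simp add: sum_distrib_left[symmetric] sum_step_weight_to[OF E])
    finally show "(\<Sum>E' | partial_perm (Suc n) E' \<and> trunc n E' = E. ?f E') = \<dots>" .
  qed
  also have "\<dots> = (if h' \<ge> 1 then up_weight x s (h' - 1) * level_sum x y q p s n (h' - 1) else 0)
     + level_weight x y q p s h' * level_sum x y q p s n h' + down_weight q p s (h' + 1) * level_sum x y q p s n (h' + 1)"
    unfolding mult_transfer_split level_sum_def
    by (simp add: sum.distrib sum_distrib_left sum_if_card_open_src_eq[symmetric])
  finally show ?thesis .
qed

lemma level_sum_eq_motzkin_weight:
  "n + h < m \<Longrightarrow> level_sum x y q p s n h
     = motzkin_weight (up_weight x s) (level_weight x y q p s) (down_weight q p s) m n h"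
proof (induction n arbitrary: h)
  case 0
  then show ?case by (simp add: level_sum_0)
next
  case (Suc n)
  then have "n + h < m" "n + (h + 1) < m" "h \<ge> 1 \<Longrightarrow> n + (h - 1) < m" "h < m" "h + 1 < m"
    by auto
  then show ?case using Suc.IH by (simp add: level_sum_Suc)
qed

section \<open>Permutations as closed partial permutations\<close>

definition graph :: "nat \<Rightarrow> (nat \<Rightarrow> nat) \<Rightarrow> (nat \<times> nat) set" where
  "graph N \<sigma> = (\<lambda>i. (i, \<sigma> i)) ` {1..N}"

lemma card_filter_eq_sum: "finite A \<Longrightarrow> card {x \<in> A. P x} = (\<Sum>x\<in>A. if P x then 1 else 0)"
  unfolding card_eq_sum by (rule sum.inter_filter)

lemma card_pairs_eq_double_sum:
  "card {(i, j). i \<in> A \<and> j \<in> A \<and> P i j} = (\<Sum>i\<in>A. \<Sum>j\<in>A. if P i j then 1 else 0)" if "finite A"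
proof -
  have "{(i, j). i \<in> A \<and> j \<in> A \<and> P i j} = Sigma A (\<lambda>i. {j \<in> A. P i j})" by auto
  then have "card {(i, j). i \<in> A \<and> j \<in> A \<and> P i j} = (\<Sum>i\<in>A. card {j \<in> A. P i j})"
    using that by (simp add: card_SigmaI)
  then show ?thesis using that by (simp add: card_filter_eq_sum)
qed

locale interval_perm =
  fixes N :: nat and \<sigma> :: "nat \<Rightarrow> nat"
  assumes perm: "\<sigma> permutes {1..N}"
begin

lemma inv_apply [simp]: "\<sigma> (inv \<sigma> v) = v" "inv \<sigma> (\<sigma> i) = i"
  using permutes_inverses[OF perm] by auto

lemma apply_eq_iff [simp]: "\<sigma> a = \<sigma> b \<longleftrightarrow> a = b"
  using permutes_inj[OF perm] by (auto simp: inj_eq)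

lemma apply_eq_iff_inv: "\<sigma> a = v \<longleftrightarrow> a = inv \<sigma> v"
  using permutes_inv_eq[OF perm] by auto

lemma apply_bounds: "1 \<le> i \<Longrightarrow> i \<le> N \<Longrightarrow> 1 \<le> \<sigma> i \<and> \<sigma> i \<le> N"
  using permutes_in_image[OF perm, of i] by auto

lemma inv_bounds: "1 \<le> v \<Longrightarrow> v \<le> N \<Longrightarrow> 1 \<le> inv \<sigma> v \<and> inv \<sigma> v \<le> N"
  using permutes_in_image[OF permutes_inv[OF perm], of v] by auto

lemma mem_trunc_graph:
  "(a, b) \<in> trunc k (graph N \<sigma>) \<longleftrightarrow> 1 \<le> a \<and> a \<le> N \<and> b = \<sigma> a \<and> a \<le> k \<and> \<sigma> a \<le> k"
  unfolding trunc_def graph_def using apply_bounds by auto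

lemma partial_perm_trunc_graph: "k \<le> N \<Longrightarrow> partial_perm k (trunc k (graph N \<sigma>))"
  unfolding partial_perm_def using mem_trunc_graph apply_bounds by auto

definition open_src_at :: "nat \<Rightarrow> nat set" where
  "open_src_at k = {a \<in> {1..k - 1}. k \<le> \<sigma> a}"

definition open_tgt_at :: "nat \<Rightarrow> nat set" where
  "open_tgt_at k = {v \<in> {1..k - 1}. k \<le> inv \<sigma> v}"

lemma open_src_trunc_graph: "k \<le> N \<Longrightarrow> open_src (k - 1) (trunc (k - 1) (graph N \<sigma>)) = open_src_at k"
  unfolding open_src_def open_src_at_def by (auto simp: image_iff mem_trunc_graph Bex_def)

lemma open_tgt_trunc_graph: "k \<le> N \<Longrightarrow> open_tgt (k - 1) (trunc (k - 1) (graph N \<sigma>)) = open_tgt_at k"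
proof -
  assume k: "k \<le> N"
  have "snd ` trunc (k - 1) (graph N \<sigma>) = {v. 1 \<le> inv \<sigma> v \<and> inv \<sigma> v \<le> N \<and> inv \<sigma> v \<le> k - 1 \<and> v \<le> k - 1}"
    by (auto simp: image_iff mem_trunc_graph Bex_def) (metis inv_apply(1))
  then show ?thesis unfolding open_tgt_def open_tgt_at_def using k inv_bounds by auto
qed

text \<open>Each pair counted by \<open>cros\<close>, \<open>nest\<close> or \<open>inv\<close> is charged to the point \<open>k\<close> at which
  \<open>local_weight\<close> sees it: for crossings and nestings the point where the first of the two arcs
  closes, for an inversion \<open>(a, b)\<close> the point \<open>max a (\<sigma> b)\<close>.\<close>

definition upper_cros_at :: "nat \<Rightarrow> nat" where
  "upper_cros_at k = card {j \<in> {1..N}. inv \<sigma> k < j \<and> j \<le> k \<and> k < \<sigma> j}"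

definition lower_cros_at :: "nat \<Rightarrow> nat" where
  "lower_cros_at k = card {j \<in> {1..N}. \<sigma> k < \<sigma> j \<and> \<sigma> j < k \<and> k < j}"

definition upper_nest_at :: "nat \<Rightarrow> nat" where
  "upper_nest_at k = card {i \<in> {1..N}. i < inv \<sigma> k \<and> inv \<sigma> k \<le> k \<and> k < \<sigma> i}"

definition lower_nest_at :: "nat \<Rightarrow> nat" where
  "lower_nest_at k = card {j \<in> {1..N}. \<sigma> j < \<sigma> k \<and> \<sigma> k < k \<and> k < j}"

definition inv_at_src :: "nat \<Rightarrow> nat" where
  "inv_at_src k = card {b \<in> {1..N}. k < b \<and> \<sigma> b < \<sigma> k \<and> \<sigma> b \<le> k}"

definition inv_at_tgt :: "nat \<Rightarrow> nat" where
  "inv_at_tgt k = card {a \<in> {1..N}. a < k \<and> a < inv \<sigma> k \<and> k < \<sigma> a}"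

lemma card_reindex_inv: "card {j \<in> {1..N}. P j} = card {v \<in> {1..N}. P (inv \<sigma> v)}"
proof -
  have "{j \<in> {1..N}. P j} = inv \<sigma> ` {v \<in> {1..N}. P (inv \<sigma> v)}"
  proof (intro equalityI subsetI)
    fix j assume "j \<in> {j \<in> {1..N}. P j}"
    then show "j \<in> inv \<sigma> ` {v \<in> {1..N}. P (inv \<sigma> v)}"
      using apply_bounds[of j] by (auto intro!: image_eqI[of _ _ "\<sigma> j"])
  qed (use inv_bounds in auto)
  moreover have "inj_on (inv \<sigma>) A" for A by (rule permutes_inj_on[OF permutes_inv[OF perm]])
  ultimately show ?thesis by (simp add: card_image)
qed

context
  fixes k assumes k: "1 \<le> k" "k \<le> N"
begin

private lemma not_preimage: "x \<noteq> inv \<sigma> k \<Longrightarrow> \<sigma> x \<noteq> k"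
  and not_image: "v \<noteq> \<sigma> k \<Longrightarrow> inv \<sigma> v \<noteq> k"
  by (metis inv_apply)+

private lemma k_images: "1 \<le> \<sigma> k \<and> \<sigma> k \<le> N" "1 \<le> inv \<sigma> k \<and> inv \<sigma> k \<le> N"
  using apply_bounds inv_bounds k by auto

lemma card_open_src_at_eq: "card (open_src_at k) = card (open_tgt_at k)"
  using card_open_src_eq_card_open_tgt[OF partial_perm_trunc_graph[of "k - 1"]] k
    open_src_trunc_graph open_tgt_trunc_graph by simp

lemma upper_cros_at_eq: "(if inv \<sigma> k \<le> k \<and> inv \<sigma> k < k then count_above (open_src_at k) (inv \<sigma> k) + (if \<sigma> k \<le> k then 0 else 1) else 0) = upper_cros_at k"
proof (cases "inv \<sigma> k < k")
  case True
  have "{j\<in>{1..N}. inv \<sigma> k < j \<and> j \<le> k \<and> k < \<sigma> j} = {a\<in>open_src_at k. inv \<sigma> k < a} \<union> {j. j = k \<and> k < \<sigma> k}"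
  proof (rule set_eqI)
    fix x show "x \<in> {j\<in>{1..N}. inv \<sigma> k < j \<and> j \<le> k \<and> k < \<sigma> j} \<longleftrightarrow> x \<in> {a\<in>open_src_at k. inv \<sigma> k < a} \<union> {j. j = k \<and> k < \<sigma> k}"
      using k k_images True not_preimage[of x] by (cases "x = k") (auto simp: open_src_at_def)
  qed
  moreover have "card ({a\<in>open_src_at k. inv \<sigma> k < a} \<union> {j. j = k \<and> k < \<sigma> k}) = card {a\<in>open_src_at k. inv \<sigma> k < a} + card {j. j = k \<and> k < \<sigma> k}"
    by (rule card_Un_disjoint) (auto simp: open_src_at_def)
  moreover have "card {j. j = k \<and> k < \<sigma> k} = (if \<sigma> k \<le> k then 0 else 1)" by auto
  ultimately show ?thesis using True by (simp add: upper_cros_at_def count_above_def)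
next
  case False
  then have "{j\<in>{1..N}. inv \<sigma> k < j \<and> j \<le> k \<and> k < \<sigma> j} = {}" by auto
  then show ?thesis using False by (simp add: upper_cros_at_def)
qed

lemma lower_cros_at_eq: "(if \<sigma> k \<le> k \<and> \<sigma> k < k then count_above (open_tgt_at k) (\<sigma> k) else 0) = lower_cros_at k"
proof (cases "\<sigma> k < k")
  case True
  have "{v\<in>{1..N}. \<sigma> k < v \<and> v < k \<and> k < inv \<sigma> v} = {v\<in>open_tgt_at k. \<sigma> k < v}"
  proof (rule set_eqI)
    fix v show "v \<in> {v\<in>{1..N}. \<sigma> k < v \<and> v < k \<and> k < inv \<sigma> v} \<longleftrightarrow> v \<in> {v\<in>open_tgt_at k. \<sigma> k < v}"
      using k k_images True not_image[of v] by (cases "v = \<sigma> k") (auto simp: open_tgt_at_def)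
  qed
  moreover have "lower_cros_at k = card {v\<in>{1..N}. \<sigma> k < v \<and> v < k \<and> k < inv \<sigma> v}"
    unfolding lower_cros_at_def using card_reindex_inv[of "\<lambda>j. \<sigma> k < \<sigma> j \<and> \<sigma> j < k \<and> k < j"] by simp
  ultimately show ?thesis using True by (simp add: count_above_def)
next
  case False
  then have "{j\<in>{1..N}. \<sigma> k < \<sigma> j \<and> \<sigma> j < k \<and> k < j} = {}" by auto
  then show ?thesis using False by (simp add: lower_cros_at_def)
qed

lemma upper_nest_at_eq: "(if inv \<sigma> k \<le> k then count_below (open_src_at k) (inv \<sigma> k) else 0) = upper_nest_at k"
proof (cases "inv \<sigma> k \<le> k")
  case True
  have "{i\<in>{1..N}. i < inv \<sigma> k \<and> inv \<sigma> k \<le> k \<and> k < \<sigma> i} = {a\<in>open_src_at k. a < inv \<sigma> k}"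
  proof (rule set_eqI)
    fix x show "x \<in> {i\<in>{1..N}. i < inv \<sigma> k \<and> inv \<sigma> k \<le> k \<and> k < \<sigma> i} \<longleftrightarrow> x \<in> {a\<in>open_src_at k. a < inv \<sigma> k}"
      using k k_images True not_preimage[of x] by (cases "x = inv \<sigma> k") (auto simp: open_src_at_def)
  qed
  then show ?thesis using True by (simp add: upper_nest_at_def count_below_def)
next
  case False
  then have "{i\<in>{1..N}. i < inv \<sigma> k \<and> inv \<sigma> k \<le> k \<and> k < \<sigma> i} = {}" by auto
  then show ?thesis using False by (simp add: upper_nest_at_def)
qed

lemma lower_nest_at_eq: "(if \<sigma> k \<le> k \<and> \<sigma> k < k then count_below (open_tgt_at k) (\<sigma> k) else 0) = lower_nest_at k"
proof (cases "\<sigma> k < k")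
  case True
  have "{v\<in>{1..N}. v < \<sigma> k \<and> \<sigma> k < k \<and> k < inv \<sigma> v} = {v\<in>open_tgt_at k. v < \<sigma> k}"
  proof (rule set_eqI)
    fix v show "v \<in> {v\<in>{1..N}. v < \<sigma> k \<and> \<sigma> k < k \<and> k < inv \<sigma> v} \<longleftrightarrow> v \<in> {v\<in>open_tgt_at k. v < \<sigma> k}"
      using k k_images True not_image[of v] by (cases "v = \<sigma> k") (auto simp: open_tgt_at_def)
  qed
  moreover have "lower_nest_at k = card {v\<in>{1..N}. v < \<sigma> k \<and> \<sigma> k < k \<and> k < inv \<sigma> v}"
    unfolding lower_nest_at_def using card_reindex_inv[of "\<lambda>j. \<sigma> j < \<sigma> k \<and> \<sigma> k < k \<and> k < j"] by simp
  ultimately show ?thesis using True by (simp add: count_below_def)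
next
  case False
  then have "{j\<in>{1..N}. \<sigma> j < \<sigma> k \<and> \<sigma> k < k \<and> k < j} = {}" by auto
  then show ?thesis using False by (simp add: lower_nest_at_def)
qed

lemma inv_at_src_eq: "(if \<sigma> k \<le> k then count_below (open_tgt_at k) (\<sigma> k) else card (open_src_at k) + (if inv \<sigma> k \<le> k then 0 else 1)) = inv_at_src k"
proof -
  have R: "inv_at_src k = card {v\<in>{1..N}. k < inv \<sigma> v \<and> v < \<sigma> k \<and> v \<le> k}"
    unfolding inv_at_src_def using card_reindex_inv[of "\<lambda>b. k < b \<and> \<sigma> b < \<sigma> k \<and> \<sigma> b \<le> k"] by simp
  show ?thesis
  proof (cases "\<sigma> k \<le> k")
    case True
    have "{v\<in>{1..N}. k < inv \<sigma> v \<and> v < \<sigma> k \<and> v \<le> k} = {v\<in>open_tgt_at k. v < \<sigma> k}"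
    proof (rule set_eqI)
      fix v show "v \<in> {v\<in>{1..N}. k < inv \<sigma> v \<and> v < \<sigma> k \<and> v \<le> k} \<longleftrightarrow> v \<in> {v\<in>open_tgt_at k. v < \<sigma> k}"
        using k k_images True not_image[of v] by (cases "v = \<sigma> k") (auto simp: open_tgt_at_def)
    qed
    then show ?thesis using True R by (simp add: count_below_def)
  next
    case False
    have e: "{v\<in>{1..N}. k < inv \<sigma> v \<and> v < \<sigma> k \<and> v \<le> k} = open_tgt_at k \<union> {v. v = k \<and> k < inv \<sigma> k}"
    proof (rule set_eqI)
      fix v show "v \<in> {v\<in>{1..N}. k < inv \<sigma> v \<and> v < \<sigma> k \<and> v \<le> k} \<longleftrightarrow> v \<in> open_tgt_at k \<union> {v. v = k \<and> k < inv \<sigma> k}"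
        using k k_images False not_image[of v] by (cases "v = k"; cases "v = \<sigma> k") (auto simp: open_tgt_at_def)
    qed
    have "card (open_tgt_at k \<union> {v. v = k \<and> k < inv \<sigma> k}) = card (open_tgt_at k) + card {v. v = k \<and> k < inv \<sigma> k}"
      by (rule card_Un_disjoint) (auto simp: open_tgt_at_def)
    moreover have "card {v. v = k \<and> k < inv \<sigma> k} = (if inv \<sigma> k \<le> k then 0 else 1)" by auto
    ultimately show ?thesis using False R e card_open_src_at_eq by simp
  qed
qed

lemma inv_at_tgt_eq: "(if inv \<sigma> k \<le> k then count_below (open_src_at k) (inv \<sigma> k) else card (open_src_at k)) = inv_at_tgt k"
proof (cases "inv \<sigma> k \<le> k")
  case True
  have "{a\<in>{1..N}. a < k \<and> a < inv \<sigma> k \<and> k < \<sigma> a} = {a\<in>open_src_at k. a < inv \<sigma> k}"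
  proof (rule set_eqI)
    fix x show "x \<in> {a\<in>{1..N}. a < k \<and> a < inv \<sigma> k \<and> k < \<sigma> a} \<longleftrightarrow> x \<in> {a\<in>open_src_at k. a < inv \<sigma> k}"
      using k k_images True not_preimage[of x] by (cases "x = inv \<sigma> k") (auto simp: open_src_at_def)
  qed
  then show ?thesis using True by (simp add: inv_at_tgt_def count_below_def)
next
  case False
  have "{a\<in>{1..N}. a < k \<and> a < inv \<sigma> k \<and> k < \<sigma> a} = open_src_at k"
  proof (rule set_eqI)
    fix x show "x \<in> {a\<in>{1..N}. a < k \<and> a < inv \<sigma> k \<and> k < \<sigma> a} \<longleftrightarrow> x \<in> open_src_at k"
      using k k_images False not_preimage[of x] by (cases "x = inv \<sigma> k") (auto simp: open_src_at_def)
  qed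
  then show ?thesis using False by (simp add: inv_at_tgt_def)
qed

lemma local_weight_trunc_graph:
  "local_weight x y q p s k (trunc k (graph N \<sigma>)) = x ^ (if \<sigma> k < k then 0 else 1) * y ^ (if \<sigma> k = k then 1 else 0)
     * q ^ (upper_cros_at k + lower_cros_at k) * p ^ (upper_nest_at k + lower_nest_at k) * s ^ (inv_at_src k + inv_at_tgt k)"
proof -
  have has_in: "(\<exists>i. (i, k) \<in> trunc k (graph N \<sigma>)) = (inv \<sigma> k \<le> k)"
    using k_images by (auto simp: mem_trunc_graph apply_eq_iff_inv)
  have the_in: "(THE i. (i, k) \<in> trunc k (graph N \<sigma>)) = inv \<sigma> k" if "inv \<sigma> k \<le> k"
    using k_images that by (intro the_equality) (auto simp: mem_trunc_graph apply_eq_iff_inv)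
  have has_out: "(\<exists>j. (k, j) \<in> trunc k (graph N \<sigma>)) = (\<sigma> k \<le> k)"
    using k k_images by (auto simp: mem_trunc_graph)
  have the_out: "(THE j. (k, j) \<in> trunc k (graph N \<sigma>)) = \<sigma> k" if "\<sigma> k \<le> k"
    using k k_images that by (intro the_equality) (auto simp: mem_trunc_graph)
  have fixed: "((k, k) \<in> trunc k (graph N \<sigma>)) = (\<sigma> k = k)"
    using k by (auto simp: mem_trunc_graph)
  have trunc: "trunc (k - 1) (trunc k (graph N \<sigma>)) = trunc (k - 1) (graph N \<sigma>)"
    by (simp add: trunc_trunc)
  show ?thesis
    apply (subst local_weight_eqI[OF has_in has_out the_in the_out trunc fixed])
      apply assumption
     apply assumption
    apply (simp only: open_src_trunc_graph[OF k(2)] open_tgt_trunc_graph[OF k(2)] upper_cros_at_eq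
        lower_cros_at_eq upper_nest_at_eq lower_nest_at_eq inv_at_src_eq inv_at_tgt_eq)
    apply simp
    done
qed

end

end

context interval_perm
begin

lemma sum_over_images: "(\<Sum>k\<in>{1..N}. f k) = (\<Sum>i\<in>{1..N}. f (\<sigma> i))"
  using sum.permute[OF perm] by (simp add: comp_def)

lemma sum_wex_indicator: "(\<Sum>k\<in>{1..N}. if \<sigma> k < k then 0 else 1::nat) = wex N \<sigma>"
  unfolding wex_def card_filter_eq_sum[OF finite_atLeastAtMost] by (intro sum.cong) auto

lemma sum_fixcount_indicator: "(\<Sum>k\<in>{1..N}. if \<sigma> k = k then 1 else 0::nat) = fixcount N \<sigma>"
  unfolding fixcount_def card_filter_eq_sum[OF finite_atLeastAtMost] by simp

lemma sum_cros_at: "(\<Sum>k\<in>{1..N}. upper_cros_at k + lower_cros_at k) = cros N \<sigma>"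
proof -
  have "(\<Sum>k\<in>{1..N}. upper_cros_at k) = (\<Sum>i\<in>{1..N}. upper_cros_at (\<sigma> i))"
    by (rule sum_over_images)
  also have "\<dots> = (\<Sum>i\<in>{1..N}. \<Sum>j\<in>{1..N}. if i < j \<and> j \<le> \<sigma> i \<and> \<sigma> i < \<sigma> j then 1 else 0)"
    unfolding upper_cros_at_def card_filter_eq_sum[OF finite_atLeastAtMost] by simp
  finally have upper: "(\<Sum>k\<in>{1..N}. upper_cros_at k) = \<dots>" .
  have lower: "(\<Sum>k\<in>{1..N}. lower_cros_at k)
      = (\<Sum>i\<in>{1..N}. \<Sum>j\<in>{1..N}. if \<sigma> i < \<sigma> j \<and> \<sigma> j < i \<and> i < j then 1 else 0)"
    unfolding lower_cros_at_def card_filter_eq_sum[OF finite_atLeastAtMost] by simp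
  have "(\<Sum>k\<in>{1..N}. upper_cros_at k + lower_cros_at k) = (\<Sum>i\<in>{1..N}. \<Sum>j\<in>{1..N}.
      (if i < j \<and> j \<le> \<sigma> i \<and> \<sigma> i < \<sigma> j then 1 else 0) + (if \<sigma> i < \<sigma> j \<and> \<sigma> j < i \<and> i < j then 1 else 0))"
    unfolding sum.distrib upper lower ..
  also have "\<dots> = (\<Sum>i\<in>{1..N}. \<Sum>j\<in>{1..N}.
      (if (i < j \<and> j \<le> \<sigma> i \<and> \<sigma> i < \<sigma> j) \<or> (\<sigma> i < \<sigma> j \<and> \<sigma> j < i \<and> i < j) then 1 else 0))"
    by (intro sum.cong refl) auto
  also have "\<dots> = cros N \<sigma>"
    unfolding cros_def card_pairs_eq_double_sum[OF finite_atLeastAtMost] ..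
  finally show ?thesis .
qed

lemma sum_nest_at: "(\<Sum>k\<in>{1..N}. upper_nest_at k + lower_nest_at k) = nest N \<sigma>"
proof -
  have "(\<Sum>k\<in>{1..N}. upper_nest_at k) = (\<Sum>j\<in>{1..N}. upper_nest_at (\<sigma> j))"
    by (rule sum_over_images)
  also have "\<dots> = (\<Sum>j\<in>{1..N}. \<Sum>i\<in>{1..N}. if i < j \<and> j \<le> \<sigma> j \<and> \<sigma> j < \<sigma> i then 1 else 0)"
    unfolding upper_nest_at_def card_filter_eq_sum[OF finite_atLeastAtMost] by (intro sum.cong refl) auto
  also have "\<dots> = (\<Sum>i\<in>{1..N}. \<Sum>j\<in>{1..N}. if i < j \<and> j \<le> \<sigma> j \<and> \<sigma> j < \<sigma> i then 1 else 0)"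
    by (rule sum.swap)
  finally have upper: "(\<Sum>k\<in>{1..N}. upper_nest_at k) = \<dots>" .
  have lower: "(\<Sum>k\<in>{1..N}. lower_nest_at k)
      = (\<Sum>i\<in>{1..N}. \<Sum>j\<in>{1..N}. if \<sigma> j < \<sigma> i \<and> \<sigma> i < i \<and> i < j then 1 else 0)"
    unfolding lower_nest_at_def card_filter_eq_sum[OF finite_atLeastAtMost] by simp
  have "(\<Sum>k\<in>{1..N}. upper_nest_at k + lower_nest_at k) = (\<Sum>i\<in>{1..N}. \<Sum>j\<in>{1..N}.
      (if i < j \<and> j \<le> \<sigma> j \<and> \<sigma> j < \<sigma> i then 1 else 0) + (if \<sigma> j < \<sigma> i \<and> \<sigma> i < i \<and> i < j then 1 else 0))"
    unfolding sum.distrib upper lower ..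
  also have "\<dots> = (\<Sum>i\<in>{1..N}. \<Sum>j\<in>{1..N}.
      (if (i < j \<and> j \<le> \<sigma> j \<and> \<sigma> j < \<sigma> i) \<or> (\<sigma> j < \<sigma> i \<and> \<sigma> i < i \<and> i < j) then 1 else 0))"
    by (intro sum.cong refl) auto
  also have "\<dots> = nest N \<sigma>"
    unfolding nest_def card_pairs_eq_double_sum[OF finite_atLeastAtMost] ..
  finally show ?thesis .
qed

lemma sum_inv_at: "(\<Sum>k\<in>{1..N}. inv_at_src k + inv_at_tgt k) = invs N \<sigma>"
proof -
  have "(\<Sum>k\<in>{1..N}. inv_at_tgt k) = (\<Sum>b\<in>{1..N}. inv_at_tgt (\<sigma> b))"
    by (rule sum_over_images)
  also have "\<dots> = (\<Sum>b\<in>{1..N}. \<Sum>a\<in>{1..N}. if a < \<sigma> b \<and> a < b \<and> \<sigma> b < \<sigma> a then 1 else 0)"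
    unfolding inv_at_tgt_def card_filter_eq_sum[OF finite_atLeastAtMost] by (intro sum.cong refl) auto
  also have "\<dots> = (\<Sum>a\<in>{1..N}. \<Sum>b\<in>{1..N}. if a < \<sigma> b \<and> a < b \<and> \<sigma> b < \<sigma> a then 1 else 0)"
    by (rule sum.swap)
  finally have tgt: "(\<Sum>k\<in>{1..N}. inv_at_tgt k) = \<dots>" .
  have src: "(\<Sum>k\<in>{1..N}. inv_at_src k)
      = (\<Sum>a\<in>{1..N}. \<Sum>b\<in>{1..N}. if a < b \<and> \<sigma> b < \<sigma> a \<and> \<sigma> b \<le> a then 1 else 0)"
    unfolding inv_at_src_def card_filter_eq_sum[OF finite_atLeastAtMost] by simp
  have "(\<Sum>k\<in>{1..N}. inv_at_src k + inv_at_tgt k) = (\<Sum>a\<in>{1..N}. \<Sum>b\<in>{1..N}.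
      (if a < b \<and> \<sigma> b < \<sigma> a \<and> \<sigma> b \<le> a then 1 else 0) + (if a < \<sigma> b \<and> a < b \<and> \<sigma> b < \<sigma> a then 1 else 0))"
    unfolding sum.distrib src tgt ..
  also have "\<dots> = (\<Sum>a\<in>{1..N}. \<Sum>b\<in>{1..N}. (if a < b \<and> \<sigma> a > \<sigma> b then 1 else 0))"
    by (intro sum.cong refl) auto
  also have "\<dots> = invs N \<sigma>"
    unfolding invs_def card_pairs_eq_double_sum[OF finite_atLeastAtMost] ..
  finally show ?thesis .
qed

lemma pp_weight_graph:
  "pp_weight x y q p s N (graph N \<sigma>) = x ^ wex N \<sigma> * y ^ fixcount N \<sigma> * q ^ cros N \<sigma> * p ^ nest N \<sigma> * s ^ invs N \<sigma>"
proof -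
  have "pp_weight x y q p s N (graph N \<sigma>) = (\<Prod>k\<in>{1..N}. x ^ (if \<sigma> k < k then 0 else 1) * y ^ (if \<sigma> k = k then 1 else 0)
     * q ^ (upper_cros_at k + lower_cros_at k) * p ^ (upper_nest_at k + lower_nest_at k) * s ^ (inv_at_src k + inv_at_tgt k))"
    unfolding pp_weight_def by (intro prod.cong refl local_weight_trunc_graph) auto
  also have "\<dots> = x ^ (\<Sum>k\<in>{1..N}. if \<sigma> k < k then 0 else 1) * y ^ (\<Sum>k\<in>{1..N}. if \<sigma> k = k then 1 else 0)
     * q ^ (\<Sum>k\<in>{1..N}. upper_cros_at k + lower_cros_at k) * p ^ (\<Sum>k\<in>{1..N}. upper_nest_at k + lower_nest_at k)
     * s ^ (\<Sum>k\<in>{1..N}. inv_at_src k + inv_at_tgt k)"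
    by (simp add: power_sum prod.distrib)
  finally show ?thesis
    unfolding sum_wex_indicator sum_fixcount_indicator sum_cros_at sum_nest_at sum_inv_at .
qed

lemma graph_closed: "partial_perm N (graph N \<sigma>) \<and> card (open_src N (graph N \<sigma>)) = 0"
proof -
  have "trunc N (graph N \<sigma>) = graph N \<sigma>" unfolding trunc_def graph_def using apply_bounds by auto
  then have "partial_perm N (graph N \<sigma>)" using partial_perm_trunc_graph[of N] by simp
  moreover have "open_src N (graph N \<sigma>) = {}" unfolding open_src_def graph_def by (auto simp: image_iff)
  ultimately show ?thesis by simp
qed

end

definition perm_of_graph :: "nat \<Rightarrow> (nat \<times> nat) set \<Rightarrow> nat \<Rightarrow> nat" where
  "perm_of_graph N E = (\<lambda>i. if i \<in> {1..N} then (THE j. (i, j) \<in> E) else i)"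

lemma perm_of_graph_graph:
  assumes "\<sigma> permutes {1..N}"
  shows "perm_of_graph N (graph N \<sigma>) = \<sigma>"
proof
  fix i
  show "perm_of_graph N (graph N \<sigma>) i = \<sigma> i"
  proof (cases "i \<in> {1..N}")
    case True
    then have "(THE j. (i, j) \<in> graph N \<sigma>) = \<sigma> i" by (intro the_equality) (auto simp: graph_def)
    then show ?thesis using True by (simp add: perm_of_graph_def)
  next
    case False
    then show ?thesis using permutes_not_in[OF assms] by (auto simp: perm_of_graph_def)
  qed
qed

context
  fixes N E assumes E: "partial_perm N E" and closed: "card (open_src N E) = 0"
begin

private lemma sub: "E \<subseteq> {1..N} \<times> {1..N}"
  and functional: "(i, j) \<in> E \<Longrightarrow> (i, j') \<in> E \<Longrightarrow> j = j'"
  and injective: "(i, j) \<in> E \<Longrightarrow> (i', j) \<in> E \<Longrightarrow> i = i'"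
  using E unfolding partial_perm_def by blast+

lemma mem_closed_iff: "(i, j) \<in> E \<longleftrightarrow> i \<in> {1..N} \<and> j = perm_of_graph N E i"
proof
  assume ij: "(i, j) \<in> E"
  then have "(THE j. (i, j) \<in> E) = j" using functional by blast
  then show "i \<in> {1..N} \<and> j = perm_of_graph N E i" using ij sub by (auto simp: perm_of_graph_def)
next
  assume i: "i \<in> {1..N} \<and> j = perm_of_graph N E i"
  have "open_src N E = {}" using closed finite_open_src by simp
  then obtain j' where ij': "(i, j') \<in> E" using i unfolding open_src_def by force
  then have "(THE j. (i, j) \<in> E) = j'" using functional by blast
  then show "(i, j) \<in> E" using i ij' by (simp add: perm_of_graph_def)
qed

lemma graph_perm_of_graph: "graph N (perm_of_graph N E) = E"
  unfolding graph_def by (auto simp: mem_closed_iff)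

lemma perm_of_graph_permutes: "perm_of_graph N E permutes {1..N}"
proof (rule bij_imp_permutes)
  let ?f = "perm_of_graph N E"
  have "inj_on ?f {1..N}"
  proof
    fix a b assume "a \<in> {1..N}" "b \<in> {1..N}" "?f a = ?f b"
    then have "(a, ?f a) \<in> E" "(b, ?f a) \<in> E" by (simp_all add: mem_closed_iff)
    then show "a = b" by (rule injective)
  qed
  moreover have "?f ` {1..N} \<subseteq> {1..N}"
  proof
    fix v assume "v \<in> ?f ` {1..N}"
    then obtain a where "a \<in> {1..N}" "(a, v) \<in> E" by (auto simp: mem_closed_iff)
    then show "v \<in> {1..N}" using sub by auto
  qed
  moreover have "{1..N} \<subseteq> ?f ` {1..N}"
  proof
    fix v assume v: "v \<in> {1..N}"
    have "open_tgt N E = {}"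
      using closed card_open_src_eq_card_open_tgt[OF E] finite_open_tgt by simp
    then obtain i where "(i, v) \<in> E" using v unfolding open_tgt_def by force
    then show "v \<in> ?f ` {1..N}" by (auto simp: mem_closed_iff)
  qed
  ultimately show "bij_betw ?f {1..N} {1..N}" by (auto simp: bij_betw_def)
qed (auto simp: perm_of_graph_def)

end

lemma A_poly_eq_level_sum: "A_poly N x y q p s = level_sum x y q p s N 0"
  unfolding A_poly_def level_sum_def
proof (rule sum.reindex_bij_witness[where i = "perm_of_graph N" and j = "graph N"])
  fix \<sigma> assume "\<sigma> \<in> {\<sigma>. \<sigma> permutes {1..N}}"
  then interpret interval_perm N \<sigma> by unfold_locales simp
  show "perm_of_graph N (graph N \<sigma>) = \<sigma>" by (rule perm_of_graph_graph[OF perm])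
  show "graph N \<sigma> \<in> {E. partial_perm N E \<and> card (open_src N E) = 0}" using graph_closed by simp
  show "pp_weight x y q p s N (graph N \<sigma>)
      = x ^ wex N \<sigma> * y ^ fixcount N \<sigma> * q ^ cros N \<sigma> * p ^ nest N \<sigma> * s ^ invs N \<sigma>"
    by (rule pp_weight_graph)
next
  fix E assume "E \<in> {E. partial_perm N E \<and> card (open_src N E) = 0}"
  then show "graph N (perm_of_graph N E) = E" "perm_of_graph N E \<in> {\<sigma>. \<sigma> permutes {1..N}}"
    using graph_perm_of_graph perm_of_graph_permutes by auto
qed

lemma jfrac_cong:
  "(\<And>k. a k * c (Suc k) = a' k * c' (Suc k)) \<Longrightarrow> jfrac a b c m k = jfrac a' b c' m k"
  by (induction m arbitrary: k) simp_all

theorem theorem4p1: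
  fixes x y q p s :: "'a::field"
  defines "a \<equiv> (\<lambda>h. x * s ^ (2 * h + 1) * qint (h + 1) q (p * s))"
      and "b \<equiv> (\<lambda>h. x * y * p ^ h * s ^ (2 * h) + (1 + x * q) * s ^ h * qint h q (p * s))"
      and "c \<equiv> (\<lambda>h. qint h q (p * s))"
  shows "(\<lambda>m. jfrac a b c m 0) \<longlonglongrightarrow>
           Abs_fps (\<lambda>n. if n = 0 then 1 else A_poly n x y q p s)"
proof (rule tendsto_fpsI)
  fix n
  let ?up = "up_weight x s" and ?lv = "level_weight x y q p s" and ?dn = "down_weight q p s"
  have "fps_nth (jfrac a b c m 0) n = (if n = 0 then 1 else A_poly n x y q p s)" if "n < m" for m
  proof -
    have "jfrac a b c m 0 = jfrac ?up ?lv ?dn m 0"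
      unfolding b_def level_weight_def[symmetric]
      by (rule jfrac_cong) (simp add: a_def c_def up_weight_def down_weight_def mult_ac)
    also have "\<dots> = motzkin_fps ?up ?lv ?dn m 0"
      using that by (simp add: motzkin_fps_0_eq_jfrac)
    finally have "fps_nth (jfrac a b c m 0) n = motzkin_weight ?up ?lv ?dn m n 0"
      by (simp add: motzkin_fps_def)
    also have "\<dots> = level_sum x y q p s n 0"
      using that by (simp add: level_sum_eq_motzkin_weight)
    finally show ?thesis
      by (simp add: level_sum_0 A_poly_eq_level_sum)
  qed
  then show "\<forall>\<^sub>F m in sequentially. fps_nth (jfrac a b c m 0) n
      = fps_nth (Abs_fps (\<lambda>n. if n = 0 then 1 else A_poly n x y q p s)) n"
    unfolding eventually_sequentially by (auto intro!: exI[of _ "Suc n"])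
qed

end
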